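(* Let $\Gamma$ be a finite graph on $n$ vertices such that $\operatorname{Aut}(\Gamma)$ acts transitively and imprimitively on $V(\Gamma)$. If $\operatorname{Aut}(\Gamma)$ has a factorizing block system, then $\Gamma$ is uniformly vertex-transitive.
   Context: A permutation of a finite set $X$ with $|X|=n$ is identified with its $n\times n$ permutation matrix (the $(u,v)$ entry is $1$ iff $\sigma(u)=v$); $J_n$ is the all-ones matrix. A group $G$ acting on $X$ is uniformly transitive if there are $n$ distinct elements $\sigma_1,\ldots,\sigma_n\in G$ whose permutation matrices satisfy $\sum_i\sigma_i=J_n$; $\Gamma$ is uniformly vertex-transitive if $\operatorname{Aut}(\Gamma)$ is uniformly transitive on $V(\Gamma)$. For $G$ transitive on $X$, a block is $B\subset X$ with $gB=B$ or $gB\cap B=\emptyset$ for all $g\in G$; it is nontrivial if $1<|B|<|X|$; $G$ is imprimitive if a nontrivial block exists. A block system is $\mathcal B=\{gB:g\in G\}$ for a block $B$; it partitions $X$ into blocks of equal size. The fixer $\mathrm{fix}_\Gamma(\mathcal B)$ is the subgroup of $\operatorname{Aut}(\Gamma)$ of automorphisms mapping each block of $\mathcal B$ to itself; the quotient $\operatorname{Aut}(\Gamma)/\mathrm{fix}_\Gamma(\mathcal B)$ acts faithfully and transitively on $\mathcal B$. A nontrivial block system $\mathcal B$ for $\operatorname{Aut}(\Gamma)$, consisting of $m$ blocks of size $k$, is factorizing if (i) $\mathrm{fix}_\Gamma(\mathcal B)$ contains $k$ distinct elements whose permutation matrices (on $V(\Gamma)$) are pairwise orthogonal for the Schur (entrywise)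 product, i.e. pairwise have zero entrywise product, and (ii) $\operatorname{Aut}(\Gamma)/\mathrm{fix}_\Gamma(\mathcal B)$ acts uniformly transitively on $\mathcal B$. *)

theory Defs
  imports "HOL-Combinatorics.Permutations"
begin

text \<open>Permutations of a set X are functions
  that permute X (identity outside X); a permutation is identified with its
  permutation matrix, so distinct permutations are distinct matrices.\<close>

definition simple_graph :: "'a set \<Rightarrow> ('a \<Rightarrow> 'a \<Rightarrow> bool) \<Rightarrow> bool" where
  "simple_graph V E \<longleftrightarrow> finite V \<and> (\<forall>u\<in>V. \<forall>v\<in>V. E u v \<longleftrightarrow> E v u) \<and> (\<forall>u\<in>V. \<not> E u u)"

definition Aut :: "'a set \<Rightarrow> ('a \<Rightarrow> 'a \<Rightarrow> bool) \<Rightarrow> ('a \<Rightarrow> 'a) set" where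
  "Aut V E = {\<sigma>. \<sigma> permutes V \<and> (\<forall>u\<in>V. \<forall>v\<in>V. E u v \<longleftrightarrow> E (\<sigma> u) (\<sigma> v))}"

text \<open>G uniformly transitive on X: there are |X| distinct elements of G whose
  permutation matrices sum to the all-ones matrix J, i.e. for all u, v in X
  exactly one of them maps u to v.\<close>
definition uniformly_transitive :: "('b \<Rightarrow> 'b) set \<Rightarrow> 'b set \<Rightarrow> bool" where
  "uniformly_transitive G X \<longleftrightarrow>
     (\<exists>S\<subseteq>G. card S = card X \<and> (\<forall>u\<in>X. \<forall>v\<in>X. \<exists>!\<sigma>\<in>S. \<sigma> u = v))"

definition uniformly_vertex_transitive :: "'a set \<Rightarrow> ('a \<Rightarrow> 'a \<Rightarrow> bool) \<Rightarrow> bool" where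
  "uniformly_vertex_transitive V E \<longleftrightarrow> uniformly_transitive (Aut V E) V"

definition transitive_on :: "('b \<Rightarrow> 'b) set \<Rightarrow> 'b set \<Rightarrow> bool" where
  "transitive_on G X \<longleftrightarrow> (\<forall>u\<in>X. \<forall>v\<in>X. \<exists>g\<in>G. g u = v)"

definition is_block :: "('b \<Rightarrow> 'b) set \<Rightarrow> 'b set \<Rightarrow> 'b set \<Rightarrow> bool" where
  "is_block G X B \<longleftrightarrow> B \<subseteq> X \<and> (\<forall>g\<in>G. g ` B = B \<or> g ` B \<inter> B = {})"

definition nontrivial_block :: "('b \<Rightarrow> 'b) set \<Rightarrow> 'b set \<Rightarrow> 'b set \<Rightarrow> bool" where
  "nontrivial_block G X B \<longleftrightarrow> is_block G X B \<and> 1 < card B \<and> card B < card X"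

definition imprimitive :: "('b \<Rightarrow> 'b) set \<Rightarrow> 'b set \<Rightarrow> bool" where
  "imprimitive G X \<longleftrightarrow> (\<exists>B. nontrivial_block G X B)"

definition block_system :: "('b \<Rightarrow> 'b) set \<Rightarrow> 'b set \<Rightarrow> 'b set set" where
  "block_system G B = (\<lambda>g. g ` B) ` G"

definition fixer :: "'a set \<Rightarrow> ('a \<Rightarrow> 'a \<Rightarrow> bool) \<Rightarrow> 'a set set \<Rightarrow> ('a \<Rightarrow> 'a) set" where
  "fixer V E \<B> = {g \<in> Aut V E. \<forall>C\<in>\<B>. g ` C = C}"

text \<open>The quotient
  Aut/fixer acts faithfully on the blocks, so its elements are identified with
  these induced permutations (distinct cosets = distinct induced permutations).\<close>
definition induced_perm :: "'a set set \<Rightarrow> ('a \<Rightarrow> 'a) \<Rightarrow> 'a set \<Rightarrow> 'a set" where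
  "induced_perm \<B> g = (\<lambda>C. if C \<in> \<B> then g ` C else C)"

definition factorizing :: "'a set \<Rightarrow> ('a \<Rightarrow> 'a \<Rightarrow> bool) \<Rightarrow> 'a set set \<Rightarrow> bool" where
  "factorizing V E \<B> \<longleftrightarrow>
     (\<exists>B. nontrivial_block (Aut V E) V B \<and> \<B> = block_system (Aut V E) B \<and>
        (\<exists>S\<subseteq>fixer V E \<B>. card S = card B \<and>
            (\<forall>\<sigma>\<in>S. \<forall>\<tau>\<in>S. \<sigma> \<noteq> \<tau> \<longrightarrow> (\<forall>u\<in>V. \<sigma> u \<noteq> \<tau> u))) \<and>
        uniformly_transitive (induced_perm \<B> ` Aut V E) \<B>)"

end

theory Submission
  imports Defs
begin

text \<open>Let \<open>\<B>\<close> be a factorizing block system with blocks of size \<open>k\<close>, let \<open>S\<close> be the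
  \<open>k\<close> block-fixing automorphisms that pairwise disagree everywhere, and lift a
  uniformly transitive set of permutations of \<open>\<B>\<close> to automorphisms \<open>R\<close>.  For
  vertices \<open>u \<in> C\<close> and \<open>v \<in> D\<close> exactly one \<open>g \<in> R\<close> carries \<open>C\<close> to \<open>D\<close>, and since the
  \<open>k\<close> values \<open>s (g u)\<close>, \<open>s \<in> S\<close>, are distinct points of \<open>D\<close>, exactly one \<open>s \<in> S\<close> sends
  \<open>g u\<close> to \<open>v\<close>.  Hence the products \<open>s \<circ> g\<close> map every vertex to every vertex in
  exactly one way, which is uniform vertex-transitivity.\<close>

locale perm_group =
  fixes G :: "('b \<Rightarrow> 'b) set" and X :: "'b set"
  assumes permutes: "g \<in> G \<Longrightarrow> g permutes X"
    and comp_closed: "g \<in> G \<Longrightarrow> h \<in> G \<Longrightarrow> g \<circ> h \<in> G"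
    and inv_closed: "g \<in> G \<Longrightarrow> inv g \<in> G"
begin

lemma block_images_eq:
  assumes "is_block G X B" "g \<in> G" "h \<in> G" "x \<in> g ` B" "x \<in> h ` B"
  shows "g ` B = h ` B"
proof -
  have h: "h permutes X" using assms(3) by (rule permutes)
  have k: "inv h \<circ> g \<in> G" using assms(2,3) by (simp add: comp_closed inv_closed)
  have "inv h x \<in> (inv h \<circ> g) ` B" "inv h x \<in> B"
    using assms(4,5) permutes_inverses(2)[OF h] by auto
  then have "(inv h \<circ> g) ` B = B" using assms(1) k unfolding is_block_def by blast
  then have "h ` (inv h \<circ> g) ` B = h ` B" by simp
  then show ?thesis using permutes_inverses(1)[OF h] by (simp add: image_comp comp_assoc)
qed

lemma block_system_disjoint:
  assumes "is_block G X B" "C \<in> block_system G B" "D \<in> block_system G B" "x \<in> C" "x \<in> D"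
  shows "C = D"
proof -
  obtain g h where "g \<in> G" "C = g ` B" "h \<in> G" "D = h ` B"
    using assms(2,3) unfolding block_system_def by blast
  then show ?thesis using block_images_eq assms(1,4,5) by blast
qed

lemma block_system_covers:
  assumes "transitive_on G X" "b \<in> B" "B \<subseteq> X" "v \<in> X"
  shows "\<exists>C\<in>block_system G B. v \<in> C"
proof -
  obtain g where "g \<in> G" "g b = v" using assms unfolding transitive_on_def by blast
  then show ?thesis using assms(2) unfolding block_system_def by blast
qed

lemma block_system_subset:
  assumes "B \<subseteq> X" "C \<in> block_system G B"
  shows "C \<subseteq> X"
  using assms permutes by (auto simp: block_system_def permutes_in_image)

lemma image_in_block_system:
  assumes "g \<in> G" "C \<in> block_system G B"
  shows "g ` C \<in> block_system G B"
proof -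
  obtain h where "h \<in> G" "C = h ` B" using assms(2) unfolding block_system_def by blast
  then have "g ` C = (g \<circ> h) ` B" "g \<circ> h \<in> G" using assms(1) comp_closed by (auto simp: image_comp)
  then show ?thesis unfolding block_system_def by blast
qed

lemma card_block_system:
  assumes "finite B" "C \<in> block_system G B"
  shows "finite C \<and> card C = card B"
proof -
  obtain g where "g \<in> G" "C = g ` B" using assms(2) unfolding block_system_def by blast
  moreover from \<open>g \<in> G\<close> have "inj g" by (rule permutes_inj[OF permutes])
  ultimately show ?thesis using assms(1) by (simp add: card_image inj_on_subset)
qed

end

lemma Aut_edge_iff:
  assumes "\<sigma> \<in> Aut V E" "u \<in> V" "v \<in> V"
  shows "E (\<sigma> u) (\<sigma> v) \<longleftrightarrow> E u v"
  using assms unfolding Aut_def by blast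

lemma perm_group_Aut: "perm_group (Aut V E) V"
proof
  fix g h assume g: "g \<in> Aut V E" and h: "h \<in> Aut V E"
  have gp: "g permutes V" and hp: "h permutes V" using g h by (simp_all add: Aut_def)
  then show "g permutes V" by -
  have "E ((g \<circ> h) u) ((g \<circ> h) v) \<longleftrightarrow> E u v" if "u \<in> V" "v \<in> V" for u v
    using that Aut_edge_iff[OF g] Aut_edge_iff[OF h] permutes_in_image[OF hp] by simp
  then show "g \<circ> h \<in> Aut V E"
    using permutes_compose[OF hp gp] unfolding Aut_def by auto
  have "E (inv g u) (inv g v) \<longleftrightarrow> E u v" if "u \<in> V" "v \<in> V" for u v
  proof -
    have "inv g u \<in> V" "inv g v \<in> V"
      using that permutes_inv[OF gp] by (simp_all add: permutes_in_image)
    then have "E (g (inv g u)) (g (inv g v)) \<longleftrightarrow> E (inv g u) (inv g v)"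
      by (rule Aut_edge_iff[OF g])
    then show ?thesis using permutes_inverses(1)[OF gp] by simp
  qed
  then show "inv g \<in> Aut V E" using permutes_inv[OF gp] unfolding Aut_def by auto
qed

lemma uniformly_transitiveI:
  assumes "U \<subseteq> G" "x\<^sub>0 \<in> X" "\<And>\<sigma>. \<sigma> \<in> U \<Longrightarrow> \<sigma> x\<^sub>0 \<in> X"
    and unique: "\<forall>u\<in>X. \<forall>v\<in>X. \<exists>!\<sigma>\<in>U. \<sigma> u = v"
  shows "uniformly_transitive G X"
proof -
  have "bij_betw (\<lambda>\<sigma>. \<sigma> x\<^sub>0) U X"
  proof (rule bij_betw_imageI)
    show "inj_on (\<lambda>\<sigma>. \<sigma> x\<^sub>0) U"
    proof (rule inj_onI)
      fix \<sigma> \<tau> assume "\<sigma> \<in> U" "\<tau> \<in> U" "\<sigma> x\<^sub>0 = \<tau> x\<^sub>0"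
      moreover have "\<exists>!\<rho>\<in>U. \<rho> x\<^sub>0 = \<sigma> x\<^sub>0" using unique assms(2,3) \<open>\<sigma> \<in> U\<close> by simp
      ultimately show "\<sigma> = \<tau>" by (auto simp: bex1_def)
    qed
    show "(\<lambda>\<sigma>. \<sigma> x\<^sub>0) ` U = X"
    proof
      show "(\<lambda>\<sigma>. \<sigma> x\<^sub>0) ` U \<subseteq> X" using assms(3) by blast
      show "X \<subseteq> (\<lambda>\<sigma>. \<sigma> x\<^sub>0) ` U"
      proof
        fix v assume "v \<in> X"
        then have "\<exists>!\<sigma>\<in>U. \<sigma> x\<^sub>0 = v" using unique assms(2) by simp
        then obtain \<sigma> where "\<sigma> \<in> U" "\<sigma> x\<^sub>0 = v" by (auto simp: bex1_def)
        then show "v \<in> (\<lambda>\<sigma>. \<sigma> x\<^sub>0) ` U" by blast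
      qed
    qed
  qed
  then have "card U = card X" by (rule bij_betw_same_card)
  then show ?thesis using assms(1) unique unfolding uniformly_transitive_def
    by (intro exI[of _ U] conjI)
qed

lemma lift_uniformly_transitive_induced_perm:
  assumes "uniformly_transitive (induced_perm \<B> ` G) \<B>"
  obtains R where "R \<subseteq> G" "\<And>C D. C \<in> \<B> \<Longrightarrow> D \<in> \<B> \<Longrightarrow> \<exists>!g\<in>R. g ` C = D"
proof -
  obtain T where T: "T \<subseteq> induced_perm \<B> ` G" "\<forall>C\<in>\<B>. \<forall>D\<in>\<B>. \<exists>!t\<in>T. t C = D"
    using assms unfolding uniformly_transitive_def by (elim exE conjE) (rule that)
  define lift where "lift t = (SOME g. g \<in> G \<and> induced_perm \<B> g = t)" for t
  have lift: "lift t \<in> G \<and> induced_perm \<B> (lift t) = t" if "t \<in> T" for t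
  proof -
    have "\<exists>g. g \<in> G \<and> induced_perm \<B> g = t" using that T(1) by blast
    then show ?thesis unfolding lift_def by (rule someI_ex)
  qed
  have lift_image: "lift t ` C = t C" if "t \<in> T" "C \<in> \<B>" for t C
  proof -
    have "t C = induced_perm \<B> (lift t) C" using lift[OF that(1)] by simp
    then show ?thesis using that(2) by (simp add: induced_perm_def)
  qed
  show thesis
  proof
    show "lift ` T \<subseteq> G" using lift by blast
    fix C D assume "C \<in> \<B>" "D \<in> \<B>"
    have "\<exists>!t. t \<in> T \<and> t C = D" using T(2)[rule_format, OF \<open>C \<in> \<B>\<close> \<open>D \<in> \<B>\<close>] .
    then obtain t where t: "t \<in> T" "t C = D" and uniq: "\<And>t'. t' \<in> T \<Longrightarrow> t' C = D \<Longrightarrow> t' = t"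
      by (metis (mono_tags, lifting))
    show "\<exists>!g\<in>lift ` T. g ` C = D"
    proof (rule ex1I[of _ "lift t"])
      show "lift t \<in> lift ` T \<and> lift t ` C = D" using t lift_image \<open>C \<in> \<B>\<close> by simp
    next
      fix g assume g: "g \<in> lift ` T \<and> g ` C = D"
      then obtain t' where t': "t' \<in> T" "g = lift t'" by blast
      then have "t' C = D" using g lift_image \<open>C \<in> \<B>\<close> by simp
      then show "g = lift t" using uniq t' by simp
    qed
  qed
qed

lemma unique_transporter_products:
  assumes covers: "\<And>v. v \<in> X \<Longrightarrow> \<exists>C\<in>\<B>. v \<in> C"
    and disjoint: "\<And>C D x. C \<in> \<B> \<Longrightarrow> D \<in> \<B> \<Longrightarrow> x \<in> C \<Longrightarrow> x \<in> D \<Longrightarrow> C = D"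
    and blocks: "\<And>C. C \<in> \<B> \<Longrightarrow> C \<subseteq> X \<and> finite C \<and> card C = card S"
    and S_fix: "\<And>s C. s \<in> S \<Longrightarrow> C \<in> \<B> \<Longrightarrow> s ` C = C"
    and S_disagree: "\<And>s s' x. s \<in> S \<Longrightarrow> s' \<in> S \<Longrightarrow> s \<noteq> s' \<Longrightarrow> x \<in> X \<Longrightarrow> s x \<noteq> s' x"
    and R_blocks: "\<And>g C. g \<in> R \<Longrightarrow> C \<in> \<B> \<Longrightarrow> g ` C \<in> \<B>"
    and R_unique: "\<And>C D. C \<in> \<B> \<Longrightarrow> D \<in> \<B> \<Longrightarrow> \<exists>!g\<in>R. g ` C = D"
  shows "\<forall>u\<in>X. \<forall>v\<in>X. \<exists>!\<sigma>\<in>{s \<circ> g | s g. s \<in> S \<and> g \<in> R}. \<sigma> u = v"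
proof (intro ballI)
  fix u v assume "u \<in> X" "v \<in> X"
  then obtain C D where C: "C \<in> \<B>" "u \<in> C" and D: "D \<in> \<B>" "v \<in> D"
    using covers by blast
  obtain g where g: "g \<in> R" "g ` C = D"
    and g_unique: "\<And>g'. g' \<in> R \<Longrightarrow> g' ` C = D \<Longrightarrow> g' = g"
    using R_unique[OF C(1) D(1), unfolded bex1_def] by blast
  have "g u \<in> D" using g C by blast
  then have gu: "g u \<in> X" using blocks[OF D(1)] by blast
  have "(\<lambda>s. s (g u)) ` S = D"
  proof (rule card_subset_eq)
    show "finite D" "(\<lambda>s. s (g u)) ` S \<subseteq> D" using blocks S_fix D(1) \<open>g u \<in> D\<close> by blast+
    have "inj_on (\<lambda>s. s (g u)) S"
    proof (rule inj_onI)
      fix s s' assume "s \<in> S" "s' \<in> S" "s (g u) = s' (g u)"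
      then show "s = s'" using S_disagree gu by blast
    qed
    then show "card ((\<lambda>s. s (g u)) ` S) = card D" using blocks[OF D(1)] by (simp add: card_image)
  qed
  then obtain s where s: "s \<in> S" "s (g u) = v" using D(2) by force
  show "\<exists>!\<sigma>\<in>{s \<circ> g | s g. s \<in> S \<and> g \<in> R}. \<sigma> u = v"
  proof (rule ex1I[of _ "s \<circ> g"])
    show "s \<circ> g \<in> {s \<circ> g | s g. s \<in> S \<and> g \<in> R} \<and> (s \<circ> g) u = v" using s g by auto
  next
    fix \<sigma> assume "\<sigma> \<in> {s \<circ> g | s g. s \<in> S \<and> g \<in> R} \<and> \<sigma> u = v"
    then obtain s' g' where \<sigma>: "\<sigma> = s' \<circ> g'" "s' \<in> S" "g' \<in> R" "s' (g' u) = v" by auto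
    have "g' ` C \<in> \<B>" using R_blocks \<sigma>(3) C(1) by blast
    moreover have "v \<in> g' ` C" using S_fix[OF \<sigma>(2) \<open>g' ` C \<in> \<B>\<close>] \<sigma>(4) C(2) by blast
    ultimately have "g' ` C = D" using disjoint D by blast
    then have "g' = g" using g_unique \<sigma>(3) by blast
    then have "s' = s" using S_disagree \<sigma>(2,4) s gu by blast
    then show "\<sigma> = s \<circ> g" using \<sigma> \<open>g' = g\<close> by simp
  qed
qed

lemma factorizing_unique_transporters:
  assumes "finite V" "transitive_on (Aut V E) V" "factorizing V E \<B>"
  obtains U where "U \<subseteq> Aut V E" "\<forall>u\<in>V. \<forall>v\<in>V. \<exists>!\<sigma>\<in>U. \<sigma> u = v"
proof -
  let ?G = "Aut V E"
  interpret perm_group ?G V by (rule perm_group_Aut)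
  obtain B S where blk: "is_block ?G V B" "1 < card B" and \<B>: "\<B> = block_system ?G B"
    and S: "S \<subseteq> fixer V E \<B>" "card S = card B" "\<forall>\<sigma>\<in>S. \<forall>\<tau>\<in>S. \<sigma> \<noteq> \<tau> \<longrightarrow> (\<forall>u\<in>V. \<sigma> u \<noteq> \<tau> u)"
    and quotient: "uniformly_transitive (induced_perm \<B> ` ?G) \<B>"
    using assms(3) unfolding factorizing_def nontrivial_block_def by blast
  obtain R where R: "R \<subseteq> ?G" "\<And>C D. C \<in> \<B> \<Longrightarrow> D \<in> \<B> \<Longrightarrow> \<exists>!g\<in>R. g ` C = D"
    using lift_uniformly_transitive_induced_perm[OF quotient] by blast
  have "B \<subseteq> V" using blk(1) by (simp add: is_block_def)
  have "finite B" using \<open>B \<subseteq> V\<close> assms(1) finite_subset by blast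
  obtain b where "b \<in> B" using blk(2) by (metis card.empty ex_in_conv not_less_zero)
  have products: "{s \<circ> g | s g. s \<in> S \<and> g \<in> R} \<subseteq> ?G"
    using S(1) R(1) comp_closed unfolding fixer_def by blast
  have "\<forall>u\<in>V. \<forall>v\<in>V. \<exists>!\<sigma>\<in>{s \<circ> g | s g. s \<in> S \<and> g \<in> R}. \<sigma> u = v"
  proof (rule unique_transporter_products)
    show "\<exists>C\<in>\<B>. v \<in> C" if "v \<in> V" for v
      using block_system_covers[OF assms(2) \<open>b \<in> B\<close> \<open>B \<subseteq> V\<close> that] unfolding \<B> .
    show "C = D" if "C \<in> \<B>" "D \<in> \<B>" "x \<in> C" "x \<in> D" for C D x
      using block_system_disjoint[OF blk(1)] that unfolding \<B> by blast
    show "C \<subseteq> V \<and> finite C \<and> card C = card S" if "C \<in> \<B>" for C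
      using that block_system_subset[OF \<open>B \<subseteq> V\<close>] card_block_system[OF \<open>finite B\<close>] S(2)
      unfolding \<B> by auto
    show "s ` C = C" if "s \<in> S" "C \<in> \<B>" for s C
      using that S(1) by (auto simp: fixer_def)
    show "s x \<noteq> s' x" if "s \<in> S" "s' \<in> S" "s \<noteq> s'" "x \<in> V" for s s' x
      using that S(3) by blast
    show "g ` C \<in> \<B>" if "g \<in> R" "C \<in> \<B>" for g C
      using that R(1) image_in_block_system unfolding \<B> by blast
  qed (fact R(2))
  then show thesis by (rule that[OF products])
qed

theorem mainTheorem9:
  fixes V :: "'a set" and E :: "'a \<Rightarrow> 'a \<Rightarrow> bool"
  assumes "simple_graph V E"
    and "transitive_on (Aut V E) V"
    and "imprimitive (Aut V E) V"
    and "\<exists>\<B>. factorizing V E \<B>"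
  shows "uniformly_vertex_transitive V E"
proof -
  obtain \<B> where \<B>: "factorizing V E \<B>" using assms(4) by blast
  have "finite V" using assms(1) by (simp add: simple_graph_def)
  obtain U where U: "U \<subseteq> Aut V E" "\<forall>u\<in>V. \<forall>v\<in>V. \<exists>!\<sigma>\<in>U. \<sigma> u = v"
    by (rule factorizing_unique_transporters[OF \<open>finite V\<close> assms(2) \<B>])
  have "card V \<noteq> 0" using assms(3) unfolding imprimitive_def nontrivial_block_def by auto
  then obtain x\<^sub>0 where "x\<^sub>0 \<in> V" by (metis card.empty ex_in_conv)
  show ?thesis unfolding uniformly_vertex_transitive_def
  proof (rule uniformly_transitiveI[OF U(1) \<open>x\<^sub>0 \<in> V\<close> _ U(2)])
    fix \<sigma> assume "\<sigma> \<in> U"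
    then have "\<sigma> permutes V" using U(1) unfolding Aut_def by blast
    then show "\<sigma> x\<^sub>0 \<in> V" using \<open>x\<^sub>0 \<in> V\<close> by (simp add: permutes_in_image)
  qed
qed

end
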